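(* If $M$ is a term of $\ell\Lambda_\infty^{4S}$, $M\to_0^* N$ and $M\to_0^* L$, then there is $P$ such that $N\to_0^* P$ and $L\to_0^* P$.
   Context: Preterms: possibly infinite trees generated by $M ::= x \mid MN \mid \lambda x.M \mid \lambda^{\downarrow}x.M \mid \lambda^{\uparrow}x.M \mid \downarrow M \mid \uparrow M$ ($\downarrow M$ inductive box, $\uparrow M$ coinductive box); substitution is capture-avoiding. Patterns: $x,\downarrow x,\uparrow x,\#x,\dagger x$; environments: finite sets of patterns, each variable in at most one; $\Theta,\Xi,\Psi,\Phi$ linear environments with marked versions $\#\Theta$ etc.; $\Upsilon,\Pi$ environments with only patterns $y$, $\downarrow y$; commas are disjoint unions. A term of $\ell\Lambda_\infty^{4S}$ is a preterm $M$ with $\Gamma\vdash M$ derivable for some $\Gamma$ by: (vl) $\#\Theta,\uparrow\Xi,\dagger\Psi,x\vdash x$; (vd) $\#\Theta,\uparrow\Xi,\dagger\Psi,\#x\vdash x$; (va) $\#\Theta,\uparrow\Xi,\dagger\Psi,\dagger x\vdash x$; (a) from $\Upsilon,\#\Theta,\uparrow\Xi,\dagger\Psi\vdash M$ and $\Pi,\#\Theta,\uparrow\Xi,\dagger\Psi\vdash N$ infer $\Upsilon,\Pi,\#\Theta,\uparrow\Xi,\dagger\Psi\vdash MN$; (ll) $\Gamma,x\vdash M$ gives $\Gamma\vdash\lambda x.M$; (li)$_1$ $\Gamma,\#x\vdash M$ gives $\Gamma\vdash\lambda^\downarrow x.M$; (li)$_2$ $\Gamma,\downarrow x\vdash M$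 gives $\Gamma\vdash\lambda^\downarrow x.M$; (lc) $\Gamma,\uparrow x\vdash M$ gives $\Gamma\vdash\lambda^\uparrow x.M$; (mi) from $\Xi,\uparrow\Psi,\dagger\Phi\vdash M$ infer $\#\Theta,\downarrow\Xi,\uparrow\Psi,\dagger\Phi\vdash\downarrow M$; (mc) from $\dagger\Xi,\dagger\Psi\vdash M$ infer $\#\Theta,\uparrow\Xi,\dagger\Psi\vdash\uparrow M$; (mc) coinductive, others inductive (every infinite branch of a derivation contains infinitely many (mc)). Basic reduction: $(\lambda x.M)N\mapsto M[N/x]$, $(\lambda^\downarrow x.M)(\downarrow N)\mapsto M[N/x]$, $(\lambda^\uparrow x.M)(\uparrow N)\mapsto M[N/x]$. $M\to_0 N$ iff $M=C[L]$, $N=C[P]$, $L\mapsto P$, where $C$ is a one-hole context whose hole lies inside no coinductive box $\uparrow(\cdot)$ (it may lie inside inductive boxes); $\to_0^*$ is its reflexive-transitive closure. *)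

theory Defs
  imports Main
begin

text \<open>Preterms: possibly infinite trees, variables as de Bruijn indices
  (so terms are identified up to alpha-conversion and substitution is
  automatically capture-avoiding).\<close>

codatatype trm =
    Var nat
  | App trm trm
  | Lam trm
  | LamI trm       \<comment> \<open>\<lambda>\<down>x.M\<close>
  | LamC trm       \<comment> \<open>\<lambda>\<up>x.M\<close>
  | IBox trm       \<comment> \<open>\<down>M, inductive box\<close>
  | CBox trm       \<comment> \<open>\<up>M, coinductive box\<close>

primcorec ren :: "(nat \<Rightarrow> nat) \<Rightarrow> trm \<Rightarrow> trm" where
  "ren f t = (case t of
      Var n \<Rightarrow> Var (f n)
    | App a b \<Rightarrow> App (ren f a) (ren f b)
    | Lam a \<Rightarrow> Lam (ren (case_nat 0 (\<lambda>n. Suc (f n))) a)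
    | LamI a \<Rightarrow> LamI (ren (case_nat 0 (\<lambda>n. Suc (f n))) a)
    | LamC a \<Rightarrow> LamC (ren (case_nat 0 (\<lambda>n. Suc (f n))) a)
    | IBox a \<Rightarrow> IBox (ren f a)
    | CBox a \<Rightarrow> CBox (ren f a))"

definition lift :: "(nat \<Rightarrow> trm) \<Rightarrow> nat \<Rightarrow> trm" where
  "lift \<sigma> = case_nat (Var 0) (\<lambda>n. ren Suc (\<sigma> n))"

primcorec subst :: "(nat \<Rightarrow> trm) \<Rightarrow> trm \<Rightarrow> trm" where
  "subst \<sigma> t = (case t of
      Var n \<Rightarrow> \<sigma> n
    | App a b \<Rightarrow> App (subst \<sigma> a) (subst \<sigma> b)
    | Lam a \<Rightarrow> Lam (subst (lift \<sigma>) a)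
    | LamI a \<Rightarrow> LamI (subst (lift \<sigma>) a)
    | LamC a \<Rightarrow> LamC (subst (lift \<sigma>) a)
    | IBox a \<Rightarrow> IBox (subst \<sigma> a)
    | CBox a \<Rightarrow> CBox (subst \<sigma> a))"

text \<open>M[N/x] where x is the variable bound by the outermost binder (index 0).\<close>
definition subst0 :: "trm \<Rightarrow> trm \<Rightarrow> trm" where
  "subst0 M N = subst (case_nat N Var) M"

text \<open>Patterns: x, \<down>x, \<up>x, #x, \<dagger>x.\<close>
datatype pat = PLin | PInd | PCoi | PHash | PDag

type_synonym env = "nat \<Rightarrow> pat option"

definition ext :: "pat \<Rightarrow> env \<Rightarrow> env" where
  "ext k \<Gamma> = case_nat (Some k) \<Gamma>"

text \<open>"#\<Theta>, \<up>\<Xi>, \<dagger>\<Psi>" shape: only patterns #x, \<up>x, \<dagger>x.\<close>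
definition shared :: "pat option \<Rightarrow> bool" where
  "shared p \<longleftrightarrow> p \<in> {None, Some PHash, Some PCoi, Some PDag}"

text \<open>Splitting for rule (a): \<Gamma> = \<Upsilon>,\<Pi>,#\<Theta>,\<up>\<Xi>,\<dagger>\<Psi>; \<Gamma>1 = \<Upsilon>,#\<Theta>,\<up>\<Xi>,\<dagger>\<Psi>; \<Gamma>2 = \<Pi>,#\<Theta>,\<up>\<Xi>,\<dagger>\<Psi>.\<close>
definition app_split :: "env \<Rightarrow> env \<Rightarrow> env \<Rightarrow> bool" where
  "app_split \<Gamma> \<Gamma>1 \<Gamma>2 \<longleftrightarrow> (\<forall>v.
     (\<Gamma> v \<in> {Some PLin, Some PInd} \<and>
        ((\<Gamma>1 v = \<Gamma> v \<and> \<Gamma>2 v = None) \<or> (\<Gamma>1 v = None \<and> \<Gamma>2 v = \<Gamma> v)))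
   \<or> (shared (\<Gamma> v) \<and> \<Gamma>1 v = \<Gamma> v \<and> \<Gamma>2 v = \<Gamma> v))"

text \<open>Premise environment of (mi): #\<Theta>,\<down>\<Xi>,\<up>\<Psi>,\<dagger>\<Phi> \<mapsto> \<Xi>,\<up>\<Psi>,\<dagger>\<Phi>.\<close>
definition mi_env :: "env \<Rightarrow> env" where
  "mi_env \<Gamma> v = (case \<Gamma> v of
      Some PInd \<Rightarrow> Some PLin | Some PCoi \<Rightarrow> Some PCoi | Some PDag \<Rightarrow> Some PDag | _ \<Rightarrow> None)"

text \<open>Premise environment of (mc): #\<Theta>,\<up>\<Xi>,\<dagger>\<Psi> \<mapsto> \<dagger>\<Xi>,\<dagger>\<Psi>.\<close>
definition mc_env :: "env \<Rightarrow> env" where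
  "mc_env \<Gamma> v = (case \<Gamma> v of
      Some PCoi \<Rightarrow> Some PDag | Some PDag \<Rightarrow> Some PDag | _ \<Rightarrow> None)"

text \<open>Mixed inductive/coinductive derivations: all rules are inductive
  except (mc), whose premise refers to the coinductive parameter R
  (nested fixpoint \<nu>X.\<mu>Y, i.e. every infinite branch has infinitely many (mc)).\<close>
inductive typ_ind :: "(env \<Rightarrow> trm \<Rightarrow> bool) \<Rightarrow> env \<Rightarrow> trm \<Rightarrow> bool"
  for R :: "env \<Rightarrow> trm \<Rightarrow> bool" where
  vl: "\<Gamma> x = Some PLin \<Longrightarrow> (\<forall>y. y \<noteq> x \<longrightarrow> shared (\<Gamma> y)) \<Longrightarrow> typ_ind R \<Gamma> (Var x)"
| vd: "\<Gamma> x = Some PHash \<Longrightarrow> (\<forall>y. y \<noteq> x \<longrightarrow> shared (\<Gamma> y)) \<Longrightarrow> typ_ind R \<Gamma> (Var x)"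
| va: "\<Gamma> x = Some PDag \<Longrightarrow> (\<forall>y. y \<noteq> x \<longrightarrow> shared (\<Gamma> y)) \<Longrightarrow> typ_ind R \<Gamma> (Var x)"
| a: "app_split \<Gamma> \<Gamma>1 \<Gamma>2 \<Longrightarrow> typ_ind R \<Gamma>1 M \<Longrightarrow> typ_ind R \<Gamma>2 N \<Longrightarrow> typ_ind R \<Gamma> (App M N)"
| ll: "typ_ind R (ext PLin \<Gamma>) M \<Longrightarrow> typ_ind R \<Gamma> (Lam M)"
| li1: "typ_ind R (ext PHash \<Gamma>) M \<Longrightarrow> typ_ind R \<Gamma> (LamI M)"
| li2: "typ_ind R (ext PInd \<Gamma>) M \<Longrightarrow> typ_ind R \<Gamma> (LamI M)"
| lc: "typ_ind R (ext PCoi \<Gamma>) M \<Longrightarrow> typ_ind R \<Gamma> (LamC M)"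
| mi: "(\<forall>v. \<Gamma> v \<noteq> Some PLin) \<Longrightarrow> typ_ind R (mi_env \<Gamma>) M \<Longrightarrow> typ_ind R \<Gamma> (IBox M)"
| mc: "(\<forall>v. shared (\<Gamma> v)) \<Longrightarrow> R (mc_env \<Gamma>) M \<Longrightarrow> typ_ind R \<Gamma> (CBox M)"

lemma typ_ind_mono[mono]: "R \<le> S \<Longrightarrow> typ_ind R \<le> typ_ind S"
proof (intro le_funI le_boolI)
  fix \<Gamma> M assume RS: "R \<le> S" and "typ_ind R \<Gamma> M"
  from this(2) show "typ_ind S \<Gamma> M"
    by (induction rule: typ_ind.induct) (use RS in \<open>auto intro: typ_ind.intros\<close>)
qed

coinductive der :: "env \<Rightarrow> trm \<Rightarrow> bool" where
  "typ_ind der \<Gamma> M \<Longrightarrow> der \<Gamma> M"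

definition is_term :: "trm \<Rightarrow> bool" where
  "is_term M \<longleftrightarrow> (\<exists>\<Gamma>. finite (dom \<Gamma>) \<and> der \<Gamma> M)"

inductive basic_red :: "trm \<Rightarrow> trm \<Rightarrow> bool" where
  "basic_red (App (Lam M) N) (subst0 M N)"
| "basic_red (App (LamI M) (IBox N)) (subst0 M N)"
| "basic_red (App (LamC M) (CBox N)) (subst0 M N)"

text \<open>Closure under one-hole contexts whose hole is not inside a coinductive box.\<close>
inductive red0 :: "trm \<Rightarrow> trm \<Rightarrow> bool" where
  base: "basic_red M N \<Longrightarrow> red0 M N"
| appL: "red0 M M' \<Longrightarrow> red0 (App M N) (App M' N)"
| appR: "red0 N N' \<Longrightarrow> red0 (App M N) (App M N')"
| lam: "red0 M M' \<Longrightarrow> red0 (Lam M) (Lam M')"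
| lamI: "red0 M M' \<Longrightarrow> red0 (LamI M) (LamI M')"
| lamC: "red0 M M' \<Longrightarrow> red0 (LamC M) (LamC M')"
| ibox: "red0 M M' \<Longrightarrow> red0 (IBox M) (IBox M')"

end

theory Submission
  imports Defs "HOL-Library.Confluence"
begin

text \<open>Reduction \<open>\<rightarrow>\<^sub>0\<close> is not confluent on arbitrary preterms: in \<open>(\<lambda>x. \<up>x) M\<close> with \<open>M \<rightarrow>\<^sub>0 M'\<close>,
  contracting first freezes \<open>M\<close> inside a coinductive box, where it can no longer be reduced.
  Typability rules this out: variables bound by \<open>\<lambda>\<close> or \<open>\<lambda>\<down>\<close> never occur free inside a
  coinductive box, and variables bound by \<open>\<lambda>\<up>\<close> occur only inside such boxes (predicate
  \<open>cbox_safe\<close>). This invariant is preserved by a Tait--Martin-L\<ouml>f style parallel reduction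
  that does not enter coinductive boxes, and on invariant terms that parallel reduction has the
  diamond property. Since it lies between \<open>\<rightarrow>\<^sub>0\<close> and \<open>\<rightarrow>\<^sub>0\<^sup>*\<close>, confluence follows.\<close>

section \<open>Substitution\<close>

lemma ren_simps [simp]:
  "ren f (Var n) = Var (f n)"
  "ren f (App a b) = App (ren f a) (ren f b)"
  "ren f (Lam a) = Lam (ren (case_nat 0 (\<lambda>n. Suc (f n))) a)"
  "ren f (LamI a) = LamI (ren (case_nat 0 (\<lambda>n. Suc (f n))) a)"
  "ren f (LamC a) = LamC (ren (case_nat 0 (\<lambda>n. Suc (f n))) a)"
  "ren f (IBox a) = IBox (ren f a)"
  "ren f (CBox a) = CBox (ren f a)"
  by (subst ren.code; simp)+

lemma subst_simps [simp]:
  "subst \<sigma> (Var n) = \<sigma> n"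
  "subst \<sigma> (App a b) = App (subst \<sigma> a) (subst \<sigma> b)"
  "subst \<sigma> (Lam a) = Lam (subst (lift \<sigma>) a)"
  "subst \<sigma> (LamI a) = LamI (subst (lift \<sigma>) a)"
  "subst \<sigma> (LamC a) = LamC (subst (lift \<sigma>) a)"
  "subst \<sigma> (IBox a) = IBox (subst \<sigma> a)"
  "subst \<sigma> (CBox a) = CBox (subst \<sigma> a)"
  by (subst subst.code; simp)+

lemma lift_simps [simp]: "lift \<sigma> 0 = Var 0" "lift \<sigma> (Suc n) = ren Suc (\<sigma> n)"
  by (simp_all add: lift_def)

lemma trm_coinduct_upto_eq:
  assumes "R a b"
    and step: "\<And>a b. R a b \<Longrightarrow> a = b
     \<or> (\<exists>a1 a2 b1 b2. a = App a1 a2 \<and> b = App b1 b2 \<and> (R a1 b1 \<or> a1 = b1) \<and> (R a2 b2 \<or> a2 = b2))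
     \<or> (\<exists>a1 b1. a = Lam a1 \<and> b = Lam b1 \<and> (R a1 b1 \<or> a1 = b1))
     \<or> (\<exists>a1 b1. a = LamI a1 \<and> b = LamI b1 \<and> (R a1 b1 \<or> a1 = b1))
     \<or> (\<exists>a1 b1. a = LamC a1 \<and> b = LamC b1 \<and> (R a1 b1 \<or> a1 = b1))
     \<or> (\<exists>a1 b1. a = IBox a1 \<and> b = IBox b1 \<and> (R a1 b1 \<or> a1 = b1))
     \<or> (\<exists>a1 b1. a = CBox a1 \<and> b = CBox b1 \<and> (R a1 b1 \<or> a1 = b1))"
  shows "a = b"
  apply (rule trm.coinduct[where R = "\<lambda>a b. R a b \<or> a = b"])
   apply (simp add: \<open>R a b\<close>)
  apply (erule disjE)
   apply (drule step)
   apply (elim disjE exE conjE; simp)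
  apply simp
  done

lemma lift_Var_comp: "lift (Var \<circ> f) = Var \<circ> case_nat 0 (\<lambda>n. Suc (f n))"
  by (simp add: lift_def fun_eq_iff split: nat.split)

lemma ren_eq_subst: "ren f t = subst (Var \<circ> f) t"
proof (rule trm_coinduct_upto_eq[where
    R = "\<lambda>a b. \<exists>f t. a = ren f t \<and> b = subst (Var \<circ> f) t"], goal_cases)
  case (2 a b)
  then obtain f t where "a = ren f t" "b = subst (Var \<circ> f) t" by blast
  then show ?case by (cases t) (auto simp: lift_Var_comp)
qed blast

lemma lift_comp_ren: "lift \<sigma> \<circ> case_nat 0 (\<lambda>n. Suc (f n)) = lift (\<sigma> \<circ> f)"
  by (simp add: lift_def fun_eq_iff split: nat.split)

lemma subst_ren: "subst \<sigma> (ren f t) = subst (\<sigma> \<circ> f) t"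
proof (rule trm_coinduct_upto_eq[where
    R = "\<lambda>a b. \<exists>\<sigma> f t. a = subst \<sigma> (ren f t) \<and> b = subst (\<sigma> \<circ> f) t"], goal_cases)
  case (2 a b)
  then obtain \<sigma> f t where "a = subst \<sigma> (ren f t)" "b = subst (\<sigma> \<circ> f) t" by blast
  then show ?case by (cases t) (auto simp flip: lift_comp_ren)
qed blast

lemma ren_ren: "ren f (ren g t) = ren (f \<circ> g) t"
  unfolding ren_eq_subst[of f] subst_ren by (simp add: ren_eq_subst comp_assoc)

lemma ren_comp_lift: "ren (case_nat 0 (\<lambda>n. Suc (f n))) \<circ> lift \<sigma> = lift (ren f \<circ> \<sigma>)"
  by (simp add: lift_def ren_ren comp_def fun_eq_iff split: nat.split)

lemma ren_subst: "ren f (subst \<sigma> t) = subst (ren f \<circ> \<sigma>) t"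
proof (rule trm_coinduct_upto_eq[where
    R = "\<lambda>a b. \<exists>\<sigma> f t. a = ren f (subst \<sigma> t) \<and> b = subst (ren f \<circ> \<sigma>) t"], goal_cases)
  case (2 a b)
  then obtain \<sigma> f t where "a = ren f (subst \<sigma> t)" "b = subst (ren f \<circ> \<sigma>) t" by blast
  then show ?case by (cases t) (auto simp flip: ren_comp_lift)
qed blast

lemma subst_comp_lift: "subst (lift \<sigma>) \<circ> lift \<tau> = lift (subst \<sigma> \<circ> \<tau>)"
  by (simp add: lift_def subst_ren ren_subst comp_def fun_eq_iff split: nat.split)

lemma subst_subst: "subst \<sigma> (subst \<tau> t) = subst (subst \<sigma> \<circ> \<tau>) t"
proof (rule trm_coinduct_upto_eq[where
    R = "\<lambda>a b. \<exists>\<sigma> \<tau> t. a = subst \<sigma> (subst \<tau> t) \<and> b = subst (subst \<sigma> \<circ> \<tau>) t"], goal_cases)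
  case (2 a b)
  then obtain \<sigma> \<tau> t where "a = subst \<sigma> (subst \<tau> t)" "b = subst (subst \<sigma> \<circ> \<tau>) t" by blast
  then show ?case by (cases t) (auto simp flip: subst_comp_lift)
qed blast

lemma lift_Var: "lift Var = Var"
  by (simp add: lift_def fun_eq_iff split: nat.split)

lemma subst_Var: "subst Var t = t"
proof (rule trm_coinduct_upto_eq[where
    R = "\<lambda>a b. a = subst Var b"], goal_cases)
  case (2 a b)
  then show ?case by (cases b) (auto simp: lift_Var)
qed simp

lemma subst_subst0: "subst \<sigma> (subst0 a b) = subst0 (subst (lift \<sigma>) a) (subst \<sigma> b)"
  unfolding subst0_def subst_subst
  by (rule arg_cong[where f = "\<lambda>\<sigma>. subst \<sigma> a"])
    (simp add: subst_ren subst_Var comp_def fun_eq_iff split: nat.split)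

inductive free_in :: "nat \<Rightarrow> trm \<Rightarrow> bool" where
  "free_in n (Var n)"
| "free_in n a \<Longrightarrow> free_in n (App a b)"
| "free_in n b \<Longrightarrow> free_in n (App a b)"
| "free_in (Suc n) a \<Longrightarrow> free_in n (Lam a)"
| "free_in (Suc n) a \<Longrightarrow> free_in n (LamI a)"
| "free_in (Suc n) a \<Longrightarrow> free_in n (LamC a)"
| "free_in n a \<Longrightarrow> free_in n (IBox a)"
| "free_in n a \<Longrightarrow> free_in n (CBox a)"

inductive_simps free_in_simps [simp]:
  "free_in n (Var m)" "free_in n (App a b)" "free_in n (Lam a)" "free_in n (LamI a)"
  "free_in n (LamC a)" "free_in n (IBox a)" "free_in n (CBox a)"

lemma free_in_renD: "free_in m (ren f t) \<Longrightarrow> \<exists>n. m = f n \<and> free_in n t"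
proof (induction m "ren f t" arbitrary: f t rule: free_in.induct)
qed (case_tac t; fastforce split: nat.split_asm)+

lemma free_in_liftD: "free_in (Suc m) (lift \<sigma> k) \<Longrightarrow> \<exists>j. k = Suc j \<and> free_in m (\<sigma> j)"
  by (cases k) (auto dest: free_in_renD)

lemma free_in_substD: "free_in m (subst \<sigma> t) \<Longrightarrow> \<exists>n. free_in n t \<and> free_in m (\<sigma> n)"
proof (induction m "subst \<sigma> t" arbitrary: \<sigma> t rule: free_in.induct)
qed (case_tac t; auto dest!: free_in_liftD dest: sym)+

lemma lift_cong_free:
  "(\<And>n. free_in (Suc n) t \<Longrightarrow> \<sigma> n = \<sigma>' n) \<Longrightarrow> free_in n t \<Longrightarrow> lift \<sigma> n = lift \<sigma>' n"
  by (cases n) auto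

lemma subst_cong_free: "(\<And>n. free_in n t \<Longrightarrow> \<sigma> n = \<sigma>' n) \<Longrightarrow> subst \<sigma> t = subst \<sigma>' t"
proof (rule trm_coinduct_upto_eq[where
    R = "\<lambda>a b. \<exists>\<sigma> \<sigma>' t. a = subst \<sigma> t \<and> b = subst \<sigma>' t \<and> (\<forall>n. free_in n t \<longrightarrow> \<sigma> n = \<sigma>' n)"], goal_cases)
  case (2 a b)
  then obtain \<sigma> \<sigma>' t where "a = subst \<sigma> t" "b = subst \<sigma>' t" "\<forall>n. free_in n t \<longrightarrow> \<sigma> n = \<sigma>' n"
    by blast
  then show ?case by (cases t) (fastforce intro: lift_cong_free)+
qed blast

section \<open>Box safety\<close>

text \<open>\<open>P\<close> holds of the variables that may be instantiated by terms which still reduce: they must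
  not occur inside a coinductive box, where reduction cannot follow them. \<open>C\<close> holds of the
  \<open>\<lambda>\<up>\<close>-bound variables, which are only ever instantiated by the body of a coinductive box and
  hence may occur only inside such boxes.\<close>
inductive cbox_safe :: "(nat \<Rightarrow> bool) \<Rightarrow> (nat \<Rightarrow> bool) \<Rightarrow> trm \<Rightarrow> bool" where
  var: "\<not> C n \<Longrightarrow> cbox_safe P C (Var n)"
| app: "cbox_safe P C a \<Longrightarrow> cbox_safe P C b \<Longrightarrow> cbox_safe P C (App a b)"
| lam: "cbox_safe (case_nat True P) (case_nat False C) a \<Longrightarrow> cbox_safe P C (Lam a)"
| lamI: "cbox_safe (case_nat True P) (case_nat False C) a \<Longrightarrow> cbox_safe P C (LamI a)"
| lamC: "cbox_safe (case_nat False P) (case_nat True C) a \<Longrightarrow> cbox_safe P C (LamC a)"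
| ibox: "cbox_safe P C a \<Longrightarrow> cbox_safe P C (IBox a)"
| cbox: "(\<And>n. P n \<Longrightarrow> \<not> free_in n a) \<Longrightarrow> cbox_safe P C (CBox a)"

inductive_simps cbox_safe_simps [simp]:
  "cbox_safe P C (Var n)" "cbox_safe P C (App a b)" "cbox_safe P C (Lam a)" "cbox_safe P C (LamI a)"
  "cbox_safe P C (LamC a)" "cbox_safe P C (IBox a)" "cbox_safe P C (CBox a)"

lemma cbox_safe_mono:
  "cbox_safe P C t \<Longrightarrow> \<forall>n. P' n \<longrightarrow> P n \<Longrightarrow> \<forall>n. C' n \<longrightarrow> C n \<Longrightarrow> cbox_safe P' C' t"
proof (induction arbitrary: P' C' rule: cbox_safe.induct)
qed (auto split: nat.split)

lemma cbox_safe_ren: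
  "cbox_safe P C t \<Longrightarrow> \<forall>n. P' (f n) \<longrightarrow> P n \<Longrightarrow> \<forall>n. C' (f n) \<longrightarrow> C n \<Longrightarrow> cbox_safe P' C' (ren f t)"
proof (induction arbitrary: P' C' f rule: cbox_safe.induct)
qed (auto split: nat.split dest: free_in_renD)

lemma cbox_safe_subst:
  "cbox_safe P C t \<Longrightarrow> \<forall>n. \<not> C n \<longrightarrow> cbox_safe Q D (\<sigma> n)
    \<Longrightarrow> \<forall>n m. \<not> P n \<longrightarrow> Q m \<longrightarrow> \<not> free_in m (\<sigma> n) \<Longrightarrow> cbox_safe Q D (subst \<sigma> t)"
proof (induction arbitrary: Q D \<sigma> rule: cbox_safe.induct)
  case (lam P C a)
  then show ?case
    by (simp, intro lam.IH) (auto split: nat.split intro!: cbox_safe_ren dest!: free_in_renD)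
next
  case (lamI P C a)
  then show ?case
    by (simp, intro lamI.IH) (auto split: nat.split intro!: cbox_safe_ren dest!: free_in_renD)
next
  case (lamC P C a)
  then show ?case
    by (simp, intro lamC.IH) (auto split: nat.split intro!: cbox_safe_ren dest!: free_in_renD)
qed (auto dest!: free_in_substD)

section \<open>Parallel reduction\<close>

lemma basic_red_subst: "basic_red\<^sup>=\<^sup>= M N \<Longrightarrow> basic_red\<^sup>=\<^sup>= (subst \<sigma> M) (subst \<sigma> N)"
  by (auto simp: subst_subst0 elim!: basic_red.cases intro: basic_red.intros)

lemma basic_red_ren: "basic_red\<^sup>=\<^sup>= M N \<Longrightarrow> basic_red\<^sup>=\<^sup>= (ren f M) (ren f N)"
  unfolding ren_eq_subst by (rule basic_red_subst)

lemma basic_red_preserves_cbox_safe: "basic_red M N \<Longrightarrow> cbox_safe P C M \<Longrightarrow> cbox_safe P C N"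
proof (induction rule: basic_red.induct)
  case (1 a b)
  then show ?case unfolding subst0_def
    by (intro cbox_safe_subst[where P = "case_nat True P" and C = "case_nat False C"])
      (auto split: nat.split)
next
  case (2 a b)
  then show ?case unfolding subst0_def
    by (intro cbox_safe_subst[where P = "case_nat True P" and C = "case_nat False C"])
      (auto split: nat.split)
next
  case (3 a b)
  then show ?case unfolding subst0_def
    by (intro cbox_safe_subst[where P = "case_nat False P" and C = "case_nat True C"])
      (auto split: nat.split)
qed

text \<open>Unlike the textbook relation, rule \<open>app\<close> also contracts redexes that only arise after
  reducing function or argument; this treats the three kinds of redex uniformly and still keeps
  \<open>par\<close> inside \<open>\<rightarrow>\<^sub>0\<^sup>*\<close>.\<close>
inductive par :: "trm \<Rightarrow> trm \<Rightarrow> bool" where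
  refl: "par M M"
| app: "par a A \<Longrightarrow> par b B \<Longrightarrow> basic_red\<^sup>=\<^sup>= (App A B) M \<Longrightarrow> par (App a b) M"
| lam: "par a a' \<Longrightarrow> par (Lam a) (Lam a')"
| lamI: "par a a' \<Longrightarrow> par (LamI a) (LamI a')"
| lamC: "par a a' \<Longrightarrow> par (LamC a) (LamC a')"
| ibox: "par a a' \<Longrightarrow> par (IBox a) (IBox a')"

lemma par_App_cong: "par a a' \<Longrightarrow> par b b' \<Longrightarrow> par (App a b) (App a' b')"
  by (simp add: par.app)

lemma par_App_iff: "par (App a b) M \<longleftrightarrow> (\<exists>A B. par a A \<and> par b B \<and> basic_red\<^sup>=\<^sup>= (App A B) M)"
proof
  assume "par (App a b) M"
  then show "\<exists>A B. par a A \<and> par b B \<and> basic_red\<^sup>=\<^sup>= (App A B) M"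
    by cases (blast intro: par.refl)+
qed (blast intro: par.app)

lemma par_Lam_iff: "par (Lam a) M \<longleftrightarrow> (\<exists>a'. M = Lam a' \<and> par a a')"
  by (auto elim: par.cases intro: par.intros)

lemma par_LamI_iff: "par (LamI a) M \<longleftrightarrow> (\<exists>a'. M = LamI a' \<and> par a a')"
  by (auto elim: par.cases intro: par.intros)

lemma par_LamC_iff: "par (LamC a) M \<longleftrightarrow> (\<exists>a'. M = LamC a' \<and> par a a')"
  by (auto elim: par.cases intro: par.intros)

lemma par_IBox_iff: "par (IBox a) M \<longleftrightarrow> (\<exists>a'. M = IBox a' \<and> par a a')"
  by (auto elim: par.cases intro: par.intros)

lemma par_CBox_iff: "par (CBox a) M \<longleftrightarrow> M = CBox a"
  by (auto elim: par.cases intro: par.intros)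

lemma par_ren: "par M N \<Longrightarrow> par (ren f M) (ren f N)"
proof (induction arbitrary: f rule: par.induct)
  case (app a A b B M)
  have "basic_red\<^sup>=\<^sup>= (App (ren f A) (ren f B)) (ren f M)"
    using basic_red_ren[OF app.hyps(3)] by simp
  then show ?case unfolding ren_simps by (rule par.app[OF app.IH])
qed (auto intro: par.intros)

lemma par_lift:
  "\<forall>n. \<not> C n \<longrightarrow> par (\<sigma> n) (\<sigma>' n) \<Longrightarrow> \<forall>n. \<not> case_nat c C n \<longrightarrow> par (lift \<sigma> n) (lift \<sigma>' n)"
  by (auto split: nat.split intro: par_ren par.refl)

lemma lift_eq_on:
  "\<forall>n. \<not> P n \<longrightarrow> \<sigma> n = \<sigma>' n \<Longrightarrow> \<forall>n. \<not> case_nat p P n \<longrightarrow> lift \<sigma> n = lift \<sigma>' n"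
  by (auto split: nat.split)

lemma par_subst_pointwise:
  "cbox_safe P C t \<Longrightarrow> \<forall>n. \<not> C n \<longrightarrow> par (\<sigma> n) (\<sigma>' n) \<Longrightarrow> \<forall>n. \<not> P n \<longrightarrow> \<sigma> n = \<sigma>' n
    \<Longrightarrow> par (subst \<sigma> t) (subst \<sigma>' t)"
proof (induction arbitrary: \<sigma> \<sigma>' rule: cbox_safe.induct)
  case (cbox P a C)
  then have "subst \<sigma> a = subst \<sigma>' a" by (auto intro: subst_cong_free)
  then show ?case by (simp add: par.refl)
qed (auto intro!: par_App_cong par.lam par.lamI par.lamC par.ibox par_lift lift_eq_on)

lemma par_subst:
  "par M M' \<Longrightarrow> cbox_safe P C M \<Longrightarrow> \<forall>n. \<not> C n \<longrightarrow> par (\<sigma> n) (\<sigma>' n) \<Longrightarrow> \<forall>n. \<not> P n \<longrightarrow> \<sigma> n = \<sigma>' n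
    \<Longrightarrow> par (subst \<sigma> M) (subst \<sigma>' M')"
proof (induction arbitrary: P C \<sigma> \<sigma>' rule: par.induct)
  case refl
  then show ?case by (rule par_subst_pointwise)
next
  case (app a A b B M)
  have "par (subst \<sigma> a) (subst \<sigma>' A)" "par (subst \<sigma> b) (subst \<sigma>' B)"
    using app.prems by (auto intro: app.IH)
  moreover have "basic_red\<^sup>=\<^sup>= (App (subst \<sigma>' A) (subst \<sigma>' B)) (subst \<sigma>' M)"
    using basic_red_subst[OF app.hyps(3)] by simp
  ultimately show ?case unfolding subst_simps by (rule par.app)
next
  case (lam a a')
  then show ?case by (auto intro!: par.lam lam.IH[OF _ par_lift lift_eq_on])
next
  case (lamI a a')
  then show ?case by (auto intro!: par.lamI lamI.IH[OF _ par_lift lift_eq_on])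
next
  case (lamC a a')
  then show ?case by (auto intro!: par.lamC lamC.IH[OF _ par_lift lift_eq_on])
next
  case (ibox a a')
  then show ?case by (auto intro!: par.ibox)
qed

lemma par_subst0:
  "par a a' \<Longrightarrow> cbox_safe (case_nat True P) (case_nat False C) a \<Longrightarrow> par b b'
    \<Longrightarrow> par (subst0 a b) (subst0 a' b')"
  unfolding subst0_def by (erule par_subst) (auto split: nat.split intro: par.refl)

lemma par_subst0_same_arg:
  "par a a' \<Longrightarrow> cbox_safe (case_nat False P) (case_nat True C) a \<Longrightarrow> par (subst0 a b) (subst0 a' b)"
  unfolding subst0_def by (erule par_subst) (auto split: nat.split intro: par.refl)

lemma par_preserves_cbox_safe: "par M N \<Longrightarrow> cbox_safe P C M \<Longrightarrow> cbox_safe P C N"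
proof (induction arbitrary: P C rule: par.induct)
  case (app a A b B M)
  then have "cbox_safe P C (App A B)" by simp
  with app.hyps(3) show ?case by (auto intro: basic_red_preserves_cbox_safe)
qed auto

fun contract :: "trm \<Rightarrow> trm" where
  "contract (App (Lam a) b) = subst0 a b"
| "contract (App (LamI a) (IBox b)) = subst0 a b"
| "contract (App (LamC a) (CBox b)) = subst0 a b"
| "contract M = M"

lemma basic_red_contract: "basic_red\<^sup>=\<^sup>= M (contract M)"
  by (cases M rule: contract.cases) (auto intro: basic_red.intros)

lemma par_contract:
  assumes "basic_red\<^sup>=\<^sup>= (App A B) M" "par A X" "par B Y" "cbox_safe P C A"
  shows "par M (contract (App X Y))"
  using assms(1)
proof
  assume "App A B = M"
  then show ?thesis using assms(2,3) basic_red_contract by (blast intro: par.app)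
next
  assume "basic_red (App A B) M"
  then show ?thesis
  proof cases
    case (1 a)
    then show ?thesis using assms(2-4) by (auto simp: par_Lam_iff intro: par_subst0)
  next
    case (2 a b)
    then show ?thesis using assms(2-4) by (auto simp: par_LamI_iff par_IBox_iff intro: par_subst0)
  next
    case (3 a b)
    then show ?thesis
      using assms(2-4) by (auto simp: par_LamC_iff par_CBox_iff intro: par_subst0_same_arg)
  qed
qed

lemma par_diamond: "par M M1 \<Longrightarrow> cbox_safe P C M \<Longrightarrow> par M M2 \<Longrightarrow> \<exists>M3. par M1 M3 \<and> par M2 M3"
proof (induction arbitrary: P C M2 rule: par.induct)
  case (refl M)
  then show ?case by (blast intro: par.refl)
next
  case (app a A1 b B1 M1)
  obtain A2 B2 where 2: "par a A2" "par b B2" "basic_red\<^sup>=\<^sup>= (App A2 B2) M2"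
    using app.prems(2) by (auto simp: par_App_iff)
  have safe: "cbox_safe P C a" "cbox_safe P C b" using app.prems(1) by auto
  obtain X where "par A1 X" "par A2 X" using app.IH(1)[OF safe(1) 2(1)] by blast
  moreover obtain Y where "par B1 Y" "par B2 Y" using app.IH(2)[OF safe(2) 2(2)] by blast
  moreover have "cbox_safe P C A1" "cbox_safe P C A2"
    using safe(1) app.hyps(1) 2(1) by (auto intro: par_preserves_cbox_safe)
  ultimately have "par M1 (contract (App X Y))" "par M2 (contract (App X Y))"
    using app.hyps(3) 2(3) by (auto intro: par_contract)
  then show ?case by blast
next
  case (lam a a1)
  obtain a2 where M2: "M2 = Lam a2" and "par a a2" using lam.prems(2) by (auto simp: par_Lam_iff)
  then obtain x where "par a1 x" "par a2 x" using lam.prems(1) lam.IH by fastforce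
  with M2 show ?case by (blast intro: par.lam)
next
  case (lamI a a1)
  obtain a2 where M2: "M2 = LamI a2" and "par a a2" using lamI.prems(2) by (auto simp: par_LamI_iff)
  then obtain x where "par a1 x" "par a2 x" using lamI.prems(1) lamI.IH by fastforce
  with M2 show ?case by (blast intro: par.lamI)
next
  case (lamC a a1)
  obtain a2 where M2: "M2 = LamC a2" and "par a a2" using lamC.prems(2) by (auto simp: par_LamC_iff)
  then obtain x where "par a1 x" "par a2 x" using lamC.prems(1) lamC.IH by fastforce
  with M2 show ?case by (blast intro: par.lamC)
next
  case (ibox a a1)
  obtain a2 where M2: "M2 = IBox a2" and "par a a2" using ibox.prems(2) by (auto simp: par_IBox_iff)
  then obtain x where "par a1 x" "par a2 x" using ibox.prems(1) ibox.IH by fastforce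
  with M2 show ?case by (blast intro: par.ibox)
qed

lemma red0_imp_par: "red0 M N \<Longrightarrow> par M N"
proof (induction rule: red0.induct)
  case (base M N)
  then show ?case by cases (auto intro: par.app[OF par.refl par.refl] basic_red.intros)
qed (auto intro: par.intros)

lemma rtranclp_map: "(\<And>x y. r x y \<Longrightarrow> r (f x) (f y)) \<Longrightarrow> r\<^sup>*\<^sup>* x y \<Longrightarrow> r\<^sup>*\<^sup>* (f x) (f y)"
  by (erule rtranclp_induct) (auto intro: rtranclp.rtrancl_into_rtrancl)

lemma par_imp_red0_rtranclp: "par M N \<Longrightarrow> red0\<^sup>*\<^sup>* M N"
proof (induction rule: par.induct)
  case (app a A b B M)
  have "red0\<^sup>*\<^sup>* (App a b) (App A b)"
    using red0.appL app.IH(1) by (rule rtranclp_map)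
  also have "red0\<^sup>*\<^sup>* (App A b) (App A B)"
    using red0.appR app.IH(2) by (rule rtranclp_map)
  also have "red0\<^sup>*\<^sup>* (App A B) M"
    using app.hyps(3) by (auto intro: red0.base)
  finally show ?case .
qed (auto intro: rtranclp_map red0.intros)

section \<open>Typable terms are box safe\<close>

lemma der_typ_ind: "der \<Gamma> M \<Longrightarrow> typ_ind der \<Gamma> M"
  by (erule der.cases) simp

inductive_cases typ_ind_VarE: "typ_ind R \<Gamma> (Var n)"
inductive_cases typ_ind_AppE: "typ_ind R \<Gamma> (App a b)"
inductive_cases typ_ind_LamE: "typ_ind R \<Gamma> (Lam a)"
inductive_cases typ_ind_LamIE: "typ_ind R \<Gamma> (LamI a)"
inductive_cases typ_ind_LamCE: "typ_ind R \<Gamma> (LamC a)"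
inductive_cases typ_ind_IBoxE: "typ_ind R \<Gamma> (IBox a)"
inductive_cases typ_ind_CBoxE: "typ_ind R \<Gamma> (CBox a)"

lemma app_split_None: "app_split \<Gamma> \<Gamma>1 \<Gamma>2 \<Longrightarrow> \<Gamma> n = None \<Longrightarrow> \<Gamma>1 n = None \<and> \<Gamma>2 n = None"
  unfolding app_split_def shared_def by metis

lemma der_free_in_dom: "free_in n M \<Longrightarrow> der \<Gamma> M \<Longrightarrow> \<Gamma> n \<noteq> None"
proof (induction arbitrary: \<Gamma> rule: free_in.induct)
qed (fastforce dest!: der_typ_ind dest: app_split_None elim!: typ_ind_VarE typ_ind_AppE typ_ind_LamE
  typ_ind_LamIE typ_ind_LamCE typ_ind_IBoxE typ_ind_CBoxE intro: der.intros
  simp: ext_def mi_env_def mc_env_def split: option.splits)+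

definition reducible_var :: "env \<Rightarrow> nat \<Rightarrow> bool" where
  "reducible_var \<Gamma> n \<longleftrightarrow> \<Gamma> n \<notin> {Some PCoi, Some PDag}"

definition coinductive_var :: "env \<Rightarrow> nat \<Rightarrow> bool" where
  "coinductive_var \<Gamma> n \<longleftrightarrow> \<Gamma> n = Some PCoi"

lemma reducible_var_ext: "reducible_var (ext k \<Gamma>) = case_nat (k \<notin> {PCoi, PDag}) (reducible_var \<Gamma>)"
  by (simp add: reducible_var_def ext_def fun_eq_iff split: nat.split)

lemma coinductive_var_ext: "coinductive_var (ext k \<Gamma>) = case_nat (k = PCoi) (coinductive_var \<Gamma>)"
  by (simp add: coinductive_var_def ext_def fun_eq_iff split: nat.split)

lemma cbox_safe_app_split:
  assumes "app_split \<Gamma> \<Gamma>1 \<Gamma>2" "\<Gamma>' \<in> {\<Gamma>1, \<Gamma>2}" "cbox_safe (reducible_var \<Gamma>') (coinductive_var \<Gamma>') M"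
  shows "cbox_safe (reducible_var \<Gamma>) (coinductive_var \<Gamma>) M"
proof -
  have \<Gamma>': "\<Gamma>' n = \<Gamma> n \<or> \<Gamma>' n = None \<and> \<Gamma> n \<in> {Some PLin, Some PInd}" for n
    using assms(1,2) unfolding app_split_def by auto
  have "reducible_var \<Gamma> n \<longrightarrow> reducible_var \<Gamma>' n" "coinductive_var \<Gamma> n \<longrightarrow> coinductive_var \<Gamma>' n" for n
    using \<Gamma>'[of n] by (auto simp: reducible_var_def coinductive_var_def)
  with assms(3) show ?thesis by (simp add: cbox_safe_mono)
qed

lemma typ_ind_cbox_safe: "typ_ind der \<Gamma> M \<Longrightarrow> cbox_safe (reducible_var \<Gamma>) (coinductive_var \<Gamma>) M"
proof (induction rule: typ_ind.induct)
  case (vl \<Gamma> x)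
  then show ?case by (simp add: coinductive_var_def)
next
  case (vd \<Gamma> x)
  then show ?case by (simp add: coinductive_var_def)
next
  case (va \<Gamma> x)
  then show ?case by (simp add: coinductive_var_def)
next
  case (a \<Gamma> \<Gamma>1 \<Gamma>2 M N)
  then show ?case by (auto intro: cbox_safe_app_split)
next
  case (mi \<Gamma> M)
  then show ?case
    by (auto elim!: cbox_safe_mono simp: reducible_var_def coinductive_var_def mi_env_def
        split: option.splits pat.splits)
next
  case (mc \<Gamma> M)
  then show ?case
    by (auto dest!: der_free_in_dom simp: reducible_var_def mc_env_def
        split: option.splits pat.splits)
qed (simp_all add: reducible_var_ext coinductive_var_ext)

section \<open>Confluence\<close>

definition par_safe :: "(nat \<Rightarrow> bool) \<Rightarrow> (nat \<Rightarrow> bool) \<Rightarrow> trm \<Rightarrow> trm \<Rightarrow> bool" where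
  "par_safe P C M N \<longleftrightarrow> cbox_safe P C M \<and> par M N"

lemma strong_confluentp_par_safe: "strong_confluentp (par_safe P C)"
proof
  fix M M1 M2
  assume "par_safe P C M M1" "par_safe P C M M2"
  then obtain M3 where "par M1 M3" "par M2 M3" "cbox_safe P C M1" "cbox_safe P C M2"
    unfolding par_safe_def by (meson par_diamond par_preserves_cbox_safe)
  then show "\<exists>M3. (par_safe P C)\<^sup>*\<^sup>* M1 M3 \<and> (par_safe P C)\<^sup>=\<^sup>= M2 M3"
    unfolding par_safe_def by blast
qed

lemma red0_rtranclp_imp_par_safe: "red0\<^sup>*\<^sup>* M N \<Longrightarrow> cbox_safe P C M \<Longrightarrow> (par_safe P C)\<^sup>*\<^sup>* M N"
proof (induction rule: converse_rtranclp_induct)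
  case (step M M')
  then have "par_safe P C M M'" "cbox_safe P C M'"
    by (auto simp: par_safe_def intro: red0_imp_par par_preserves_cbox_safe)
  with step.IH show ?case by (auto intro: converse_rtranclp_into_rtranclp)
qed simp

lemma par_safe_rtranclp_imp_red0: "(par_safe P C)\<^sup>*\<^sup>* M N \<Longrightarrow> red0\<^sup>*\<^sup>* M N"
  by (induction rule: rtranclp_induct) (auto simp: par_safe_def dest: par_imp_red0_rtranclp)

theorem mainTheorem20:
  assumes "is_term M" and "red0\<^sup>*\<^sup>* M N" and "red0\<^sup>*\<^sup>* M L"
  shows "\<exists>P. red0\<^sup>*\<^sup>* N P \<and> red0\<^sup>*\<^sup>* L P"
proof -
  obtain \<Gamma> where "der \<Gamma> M" using assms(1) unfolding is_term_def by blast
  then have "cbox_safe (reducible_var \<Gamma>) (coinductive_var \<Gamma>) M"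
    by (intro typ_ind_cbox_safe der_typ_ind)
  with assms(2,3) have "(par_safe (reducible_var \<Gamma>) (coinductive_var \<Gamma>))\<^sup>*\<^sup>* M N"
    "(par_safe (reducible_var \<Gamma>) (coinductive_var \<Gamma>))\<^sup>*\<^sup>* M L"
    by (auto intro: red0_rtranclp_imp_par_safe)
  then obtain P where "(par_safe (reducible_var \<Gamma>) (coinductive_var \<Gamma>))\<^sup>*\<^sup>* N P"
    "(par_safe (reducible_var \<Gamma>) (coinductive_var \<Gamma>))\<^sup>*\<^sup>* L P"
    using confluentpD[OF strong_confluentp_imp_confluentp[OF strong_confluentp_par_safe]] by blast
  then show ?thesis by (blast dest: par_safe_rtranclp_imp_red0)
qed

end
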